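(* Let $n\ge 2$, let $A\in\mathbb R^{n\times n}$ have $A_{i,i+1}=1$ ($i=1,\dots,n-1$) and all other entries $0$, and $b=(0,\dots,0,1)^T$ with entries $b_i$. Consider the discrete system $$\xi(t+1) = A\xi(t) + b\mu(t) + \mathfrak F^{[2]}(\xi(t)) + G\xi(t)\mu(t) + h\mu(t)^2 + O(\xi,\mu)^3,$$ with $\mathfrak F^{[2]}(\xi)=(\xi^TF_1\xi,\dots,\xi^TF_n\xi)^T$, symmetric $F_i\in\mathbb R^{n\times n}$, $G\in\mathbb R^{n\times n}$, $h\in\mathbb R^n$. Write $$\sum_{i=1}^{n-1}\mathbf X_iF_iA + \tfrac12G = L + D + U$$ with $L$ strictly lower triangular, $D$ diagonal and $U$ strictly upper triangular. Then the Brunovsky form of this system (its quadratically equivalent system, under transformations $\xi=x+\mathfrak P^{[2]}(x)+O(x)^3$, $\mu=\nu-x^TQx+O(x,\nu)^3$ with symmetric $P_1,\dots,P_n,Q$, of the form $x_i(t+1)=x_{i+1}(t)+b_i\nu(t)+x^T\bar F_ix+\bar G_ix\nu+O(x,\nu)^3$, $x_{n+1}\equiv0$) has coefficients $$\bar F_i = 0\ (i=1,\dots,n),\qquad \bar G = 2(L+D),$$ i.e. it reads $x_i(t+1) = x_{i+1}(t) + b_i\nu(t) + \sum_{j=1}^{i}\bar G_{ij}x_j(t)\nu(t) + O(x,\nu)^3$, $i=1,\dots,n$.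
   Context: $\mathfrak P^{[2]}(x)=(x^TP_1x,\dots,x^TP_nx)^T$. $\mathbf L:\mathbb R^{n\times n}\to\mathbb R^{n\times n}$ is $\mathbf LP=A^TPA$, with $\mathbf L^0P=P$ and $\mathbf L^{k+1}=\mathbf L\circ\mathbf L^k$. $\mathbf X_0P$ is the $n\times n$ matrix whose $k$th row ($k=1,\dots,n$) is the $n$th row of $\mathbf L^{k-1}P$, and $\mathbf X_iP=(A^T)^i\mathbf X_0P$ for $i\ge1$. $O(\cdot)^3$ denotes terms of total degree at least three. Quadratic equivalence means the original system is transformed into the new one (up to terms of degree three and higher) by substituting the given transformation; the Brunovsky form is the quadratically equivalent system with the fewest nonlinear (quadratic/bilinear) terms. *)

theory Defs
  imports Complex_Main
begin

text \<open>Convention: n is the state dimension; vectors are functions nat \<Rightarrow> real and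
  n\<times>n matrices are functions nat \<Rightarrow> nat \<Rightarrow> real, indexed 1-based over {1..n}
  (values outside {1..n} are never used).\<close>

definition mmul :: "nat \<Rightarrow> (nat \<Rightarrow> nat \<Rightarrow> real) \<Rightarrow> (nat \<Rightarrow> nat \<Rightarrow> real) \<Rightarrow> nat \<Rightarrow> nat \<Rightarrow> real" where
  "mmul n M N = (\<lambda>i j. \<Sum>k=1..n. M i k * N k j)"

definition mtrans :: "(nat \<Rightarrow> nat \<Rightarrow> real) \<Rightarrow> nat \<Rightarrow> nat \<Rightarrow> real" where
  "mtrans M = (\<lambda>i j. M j i)"

definition matvec :: "nat \<Rightarrow> (nat \<Rightarrow> nat \<Rightarrow> real) \<Rightarrow> (nat \<Rightarrow> real) \<Rightarrow> nat \<Rightarrow> real" where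
  "matvec n M x = (\<lambda>i. \<Sum>j=1..n. M i j * x j)"

definition quadform :: "nat \<Rightarrow> (nat \<Rightarrow> nat \<Rightarrow> real) \<Rightarrow> (nat \<Rightarrow> real) \<Rightarrow> real" where
  "quadform n P x = (\<Sum>j=1..n. \<Sum>k=1..n. x j * P j k * x k)"

definition symm :: "nat \<Rightarrow> (nat \<Rightarrow> nat \<Rightarrow> real) \<Rightarrow> bool" where
  "symm n P \<longleftrightarrow> (\<forall>j\<in>{1..n}. \<forall>k\<in>{1..n}. P j k = P k j)"

definition Amat :: "nat \<Rightarrow> nat \<Rightarrow> nat \<Rightarrow> real" where
  "Amat n = (\<lambda>i j. if 1 \<le> i \<and> i < n \<and> j = i + 1 then 1 else 0)"

definition bvec :: "nat \<Rightarrow> nat \<Rightarrow> real" where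
  "bvec n = (\<lambda>i. if i = n then 1 else 0)"

definition Lop :: "nat \<Rightarrow> (nat \<Rightarrow> nat \<Rightarrow> real) \<Rightarrow> nat \<Rightarrow> nat \<Rightarrow> real" where
  "Lop n P = mmul n (mtrans (Amat n)) (mmul n P (Amat n))"

definition X0 :: "nat \<Rightarrow> (nat \<Rightarrow> nat \<Rightarrow> real) \<Rightarrow> nat \<Rightarrow> nat \<Rightarrow> real" where
  "X0 n P = (\<lambda>k j. ((Lop n ^^ (k - 1)) P) n j)"

definition Xop :: "nat \<Rightarrow> nat \<Rightarrow> (nat \<Rightarrow> nat \<Rightarrow> real) \<Rightarrow> nat \<Rightarrow> nat \<Rightarrow> real" where
  "Xop n i P = ((\<lambda>M. mmul n (mtrans (Amat n)) M) ^^ i) (X0 n P)"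

definition sys_map :: "nat \<Rightarrow> (nat \<Rightarrow> nat \<Rightarrow> nat \<Rightarrow> real) \<Rightarrow> (nat \<Rightarrow> nat \<Rightarrow> real) \<Rightarrow> (nat \<Rightarrow> real)
    \<Rightarrow> (nat \<Rightarrow> real) \<Rightarrow> real \<Rightarrow> nat \<Rightarrow> real" where
  "sys_map n F G h z u = (\<lambda>i. matvec n (Amat n) z i + bvec n i * u + quadform n (F i) z
       + matvec n G z i * u + h i * u ^ 2)"

definition is_O3 :: "nat \<Rightarrow> ((nat \<Rightarrow> real) \<Rightarrow> real \<Rightarrow> nat \<Rightarrow> real) \<Rightarrow> bool" where
  "is_O3 n R \<longleftrightarrow> (\<exists>C \<delta>. \<delta> > 0 \<and> (\<forall>x \<nu>. (\<Sum>j=1..n. \<bar>x j\<bar>) + \<bar>\<nu>\<bar> < \<delta> \<longrightarrow>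
       (\<forall>i\<in>{1..n}. \<bar>R x \<nu> i\<bar> \<le> C * ((\<Sum>j=1..n. \<bar>x j\<bar>) + \<bar>\<nu>\<bar>) ^ 3)))"

text \<open>Quadratic equivalence: substituting \<xi> = x + P(x), \<mu> = \<nu> - x^T Q x (symmetric P_i, Q)
  into the original system yields the new one up to terms of degree \<ge> 3, i.e.
  \<xi>(t+1) = x(t+1) + P(x(t+1)) agrees with f(\<xi>(t),\<mu>(t)) up to O(x,\<nu>)^3.\<close>
definition quad_equiv :: "nat \<Rightarrow> (nat \<Rightarrow> nat \<Rightarrow> nat \<Rightarrow> real) \<Rightarrow> (nat \<Rightarrow> nat \<Rightarrow> real) \<Rightarrow> (nat \<Rightarrow> real)
    \<Rightarrow> (nat \<Rightarrow> nat \<Rightarrow> nat \<Rightarrow> real) \<Rightarrow> (nat \<Rightarrow> nat \<Rightarrow> real) \<Rightarrow> (nat \<Rightarrow> real) \<Rightarrow> bool" where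
  "quad_equiv n F G h Fb Gb hb \<longleftrightarrow>
     (\<exists>P Q. (\<forall>i\<in>{1..n}. symm n (P i)) \<and> symm n Q \<and>
        is_O3 n (\<lambda>x \<nu>. let \<Phi> = (\<lambda>y. (\<lambda>i. y i + quadform n (P i) y));
                            x' = sys_map n Fb Gb hb x \<nu>
                        in (\<lambda>i. \<Phi> x' i - sys_map n F G h (\<Phi> x) (\<nu> - quadform n Q x) i)))"

text \<open>Number of nonlinear terms of x_i(t+1) = x_{i+1} + b_i \<nu> + x^T Fb_i x + Gb_i x \<nu>
  (Fb_i symmetric): monomials x_j x_k (j \<le> k) and x_j \<nu> with nonzero coefficient.\<close>
definition nterms :: "nat \<Rightarrow> (nat \<Rightarrow> nat \<Rightarrow> nat \<Rightarrow> real) \<Rightarrow> (nat \<Rightarrow> nat \<Rightarrow> real) \<Rightarrow> nat" where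
  "nterms n Fb Gb =
     card {(i, j, k). i \<in> {1..n} \<and> j \<in> {1..n} \<and> k \<in> {1..n} \<and> j \<le> k \<and> Fb i j k \<noteq> 0}
   + card {(i, j). i \<in> {1..n} \<and> j \<in> {1..n} \<and> Gb i j \<noteq> 0}"

text \<open>(Fb, Gb) is a Brunovsky form of the system (F, G, h): it is a quadratically equivalent
  system of the form x_i(t+1) = x_{i+1} + b_i \<nu> + x^T Fb_i x + Gb_i x \<nu> + O^3 (no \<nu>^2 terms)
  with the fewest nonlinear terms among all such quadratically equivalent systems.\<close>
definition is_brunovsky :: "nat \<Rightarrow> (nat \<Rightarrow> nat \<Rightarrow> nat \<Rightarrow> real) \<Rightarrow> (nat \<Rightarrow> nat \<Rightarrow> real) \<Rightarrow> (nat \<Rightarrow> real)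
    \<Rightarrow> (nat \<Rightarrow> nat \<Rightarrow> nat \<Rightarrow> real) \<Rightarrow> (nat \<Rightarrow> nat \<Rightarrow> real) \<Rightarrow> bool" where
  "is_brunovsky n F G h Fb Gb \<longleftrightarrow>
     (\<forall>i\<in>{1..n}. symm n (Fb i)) \<and> quad_equiv n F G h Fb Gb (\<lambda>_. 0) \<and>
     (\<forall>Fb' Gb'. (\<forall>i\<in>{1..n}. symm n (Fb' i)) \<and> quad_equiv n F G h Fb' Gb' (\<lambda>_. 0)
        \<longrightarrow> nterms n Fb Gb \<le> nterms n Fb' Gb')"

definition Mmat :: "nat \<Rightarrow> (nat \<Rightarrow> nat \<Rightarrow> nat \<Rightarrow> real) \<Rightarrow> (nat \<Rightarrow> nat \<Rightarrow> real) \<Rightarrow> nat \<Rightarrow> nat \<Rightarrow> real" where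
  "Mmat n F G = (\<lambda>j k. (\<Sum>i=1..n-1. mmul n (Xop n i (F i)) (Amat n) j k) + G j k / 2)"

definition lower_diag :: "(nat \<Rightarrow> nat \<Rightarrow> real) \<Rightarrow> nat \<Rightarrow> nat \<Rightarrow> real" where
  "lower_diag M = (\<lambda>j k. if k \<le> j then M j k else 0)"

end

theory Submission
  imports Defs
begin

text \<open>
  Substituting the transformation into the system, the residual is a part that is homogeneous
  of degree two in (x, \<nu>) plus terms of order three. By homogeneity the residual is of order
  three iff its quadratic part vanishes identically, i.e. iff P, Q, Fb and Gb satisfy the
  homological equations P_{i+1} = A^T P_i A - F_i + Fb_i (i < n), Q = F_n - Fb_n - A^T P_n A,
  (P_i)_{nn} = h_i and Gb_i = G_i - 2 e_n^T P_i A.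
  Because A is the shift, the recurrence can be solved explicitly: the last row of P_i is a row
  of P_1 moved i - 1 places, minus the correspondingly shifted rows of F_m - Fb_m for m < i.
  On and below the diagonal the contribution of P_1 drops out, so there Gb = 2 (L + D) minus
  shifted entries of Fb; above it, the free matrix P_1 can absorb U.
  Hence Fb = 0 together with a suitable P_1 realises Gb = 2 (L + D), and in any other
  quadratically equivalent form each nonzero entry of L + D at which Gb vanishes is produced by
  a nonzero entry of some Fb_m which determines its position, so that form has at least as many
  nonlinear terms.
\<close>

section \<open>Quadratic and bilinear forms\<close>

type_synonym vec = "nat \<Rightarrow> real"
type_synonym mat = "nat \<Rightarrow> nat \<Rightarrow> real"

definition bilin :: "nat \<Rightarrow> mat \<Rightarrow> vec \<Rightarrow> vec \<Rightarrow> real" where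
  "bilin n P u v = (\<Sum>j=1..n. \<Sum>k=1..n. u j * P j k * v k)"

lemma quadform_eq_bilin: "quadform n P x = bilin n P x x"
  unfolding quadform_def bilin_def ..

lemma quadform_add:
  "quadform n P (\<lambda>j. u j + v j) = quadform n P u + bilin n P u v + bilin n P v u + quadform n P v"
  unfolding quadform_def bilin_def by (simp add: algebra_simps sum.distrib)

lemma quadform_scale: "quadform n P (\<lambda>j. t * x j) = t\<^sup>2 * quadform n P x"
  unfolding quadform_def by (simp add: sum_distrib_left power2_eq_square algebra_simps)

lemma quadform_matrix_add: "quadform n (\<lambda>a b. P a b + P' a b) x = quadform n P x + quadform n P' x"
  unfolding quadform_def by (simp add: algebra_simps sum.distrib)

lemma quadform_matrix_diff: "quadform n (\<lambda>a b. P a b - P' a b) x = quadform n P x - quadform n P' x"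
  unfolding quadform_def by (simp add: algebra_simps sum_subtractf)

lemma quadform_zero_matrix: "quadform n (\<lambda>a b. 0) x = 0"
  unfolding quadform_def by simp

lemma quadform_zero_vector: "quadform n P (\<lambda>_. 0) = 0"
  unfolding quadform_def by simp

lemma quadform_eq_sum_matvec: "quadform n P x = (\<Sum>j=1..n. x j * matvec n P x j)"
  unfolding quadform_def matvec_def by (simp add: sum_distrib_left mult.assoc)

lemma matvec_add: "matvec n M (\<lambda>j. u j + v j) i = matvec n M u i + matvec n M v i"
  unfolding matvec_def by (simp add: algebra_simps sum.distrib)

lemma matvec_scale: "matvec n M (\<lambda>j. t * x j) i = t * matvec n M x i"
  unfolding matvec_def by (simp add: sum_distrib_left algebra_simps)

lemma matvec_zero_vector: "matvec n M (\<lambda>_. 0) i = 0"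
  unfolding matvec_def by simp

lemma matvec_mmul: "matvec n M (matvec n N x) i = matvec n (mmul n M N) x i"
proof -
  have "matvec n M (matvec n N x) i = (\<Sum>j=1..n. \<Sum>a=1..n. M i j * (N j a * x a))"
    unfolding matvec_def by (simp add: sum_distrib_left)
  also have "\<dots> = matvec n (mmul n M N) x i"
    unfolding matvec_def mmul_def by (subst sum.swap) (simp add: sum_distrib_right mult.assoc)
  finally show ?thesis .
qed

lemma quadform_matvec: "quadform n P (matvec n M x) = quadform n (mmul n (mtrans M) (mmul n P M)) x"
proof -
  define v where "v = matvec n (mmul n P M) x"
  have "quadform n P (matvec n M x) = (\<Sum>j=1..n. \<Sum>a=1..n. M j a * x a * v j)"
    unfolding quadform_eq_sum_matvec matvec_mmul[symmetric] v_def
    by (simp add: matvec_def[of n M] sum_distrib_right)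
  also have "\<dots> = (\<Sum>a=1..n. x a * (\<Sum>j=1..n. mtrans M a j * v j))"
    by (subst sum.swap) (simp add: mtrans_def sum_distrib_left ac_simps)
  also have "\<dots> = quadform n (mmul n (mtrans M) (mmul n P M)) x"
    unfolding quadform_eq_sum_matvec v_def matvec_mmul[symmetric] by (simp add: matvec_def[of n "mtrans M"])
  finally show ?thesis .
qed

definition unit_vec :: "nat \<Rightarrow> vec" where
  "unit_vec j = (\<lambda>a. if a = j then 1 else 0)"

lemma sum_mult_unit_vec: "b \<in> {1..n} \<Longrightarrow> (\<Sum>k=1..n. f k * unit_vec b k) = f b"
  unfolding unit_vec_def by (simp add: if_distrib if_distribR cong: if_cong)

lemma matvec_unit_vec: "k \<in> {1..n} \<Longrightarrow> matvec n M (unit_vec k) i = M i k"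
  unfolding matvec_def by (rule sum_mult_unit_vec)

lemma bilin_unit_vec:
  assumes "a \<in> {1..n}" "b \<in> {1..n}"
  shows "bilin n S (unit_vec a) (unit_vec b) = S a b"
proof -
  have "bilin n S (unit_vec a) (unit_vec b) = (\<Sum>j=1..n. unit_vec a j * S j b)"
    unfolding bilin_def sum_mult_unit_vec[OF assms(2)] ..
  also have "\<dots> = S a b"
    using sum_mult_unit_vec[OF assms(1), of "\<lambda>j. S j b"] by (simp add: mult.commute)
  finally show ?thesis .
qed

lemma symm_quadform_eq_zero_iff:
  assumes "symm n S"
  shows "(\<forall>x. quadform n S x = 0) \<longleftrightarrow> (\<forall>a\<in>{1..n}. \<forall>b\<in>{1..n}. S a b = 0)"
proof
  assume zero: "\<forall>x. quadform n S x = 0"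
  show "\<forall>a\<in>{1..n}. \<forall>b\<in>{1..n}. S a b = 0"
  proof (intro ballI)
    fix a b assume a: "a \<in> {1..n}" and b: "b \<in> {1..n}"
    have "quadform n S (\<lambda>t. unit_vec a t + unit_vec b t)
        = S a a + S a b + S b a + S b b"
      unfolding quadform_add quadform_eq_bilin using a b by (simp add: bilin_unit_vec)
    moreover have "S b a = S a b" using assms a b unfolding symm_def by blast
    moreover have "S a a = 0" "S b b = 0"
      using zero bilin_unit_vec[OF a a] bilin_unit_vec[OF b b] unfolding quadform_eq_bilin by metis+
    ultimately show "S a b = 0" using zero by simp
  qed
qed (auto simp: quadform_def intro!: sum.neutral)

section \<open>The shift matrix A and the input vector b\<close>

lemma matvec_Amat: "1 \<le> i \<Longrightarrow> matvec n (Amat n) x i = (if i < n then x (Suc i) else 0)"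
  unfolding matvec_def Amat_def by (auto simp: if_distrib if_distribR cong: if_cong)

lemma bilin_bvec_right: "1 \<le> n \<Longrightarrow> bilin n P u (\<lambda>k. bvec n k * c) = c * (\<Sum>j=1..n. u j * P j n)"
  unfolding bilin_def bvec_def by (simp add: if_distrib if_distribR sum_distrib_left ac_simps cong: if_cong)

lemma bilin_bvec_left: "1 \<le> n \<Longrightarrow> bilin n P (\<lambda>k. bvec n k * c) u = c * (\<Sum>j=1..n. P n j * u j)"
  unfolding bilin_def bvec_def
  by (subst sum.swap) (simp add: if_distrib if_distribR sum_distrib_left ac_simps cong: if_cong)

lemma quadform_bvec: "1 \<le> n \<Longrightarrow> quadform n P (\<lambda>k. bvec n k * c) = c\<^sup>2 * P n n"
  unfolding quadform_eq_bilin bilin_bvec_left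
  by (simp add: bvec_def power2_eq_square if_distrib if_distribR cong: if_cong)

lemma mmul_Amat_entry: "mmul n P (Amat n) a b = (if 2 \<le> b \<and> b \<le> n then P a (b - 1) else 0)"
proof (cases "2 \<le> b \<and> b \<le> n")
  case True
  then have "mmul n P (Amat n) a b = (\<Sum>l=1..n. if l = b - 1 then P a l else 0)"
    unfolding mmul_def Amat_def by (intro sum.cong) auto
  with True show ?thesis by auto
qed (auto simp: mmul_def Amat_def intro!: sum.neutral)

lemma mmul_transpose_Amat_entry:
  "mmul n (mtrans (Amat n)) M a b = (if 2 \<le> a \<and> a \<le> n then M (a - 1) b else 0)"
proof (cases "2 \<le> a \<and> a \<le> n")
  case True
  then have "mmul n (mtrans (Amat n)) M a b = (\<Sum>l=1..n. if l = a - 1 then M l b else 0)"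
    unfolding mmul_def Amat_def mtrans_def by (intro sum.cong) auto
  with True show ?thesis by auto
qed (auto simp: mmul_def Amat_def mtrans_def intro!: sum.neutral)

lemma Lop_entry:
  "Lop n P a b = (if 2 \<le> a \<and> a \<le> n \<and> 2 \<le> b \<and> b \<le> n then P (a - 1) (b - 1) else 0)"
  unfolding Lop_def mmul_transpose_Amat_entry mmul_Amat_entry by auto

lemma symm_Lop:
  assumes "symm n P"
  shows "symm n (Lop n P)"
  unfolding symm_def
proof (intro ballI)
  fix j k assume jk: "j \<in> {1..n}" "k \<in> {1..n}"
  have "P (j - 1) (k - 1) = P (k - 1) (j - 1)" if "2 \<le> j" "2 \<le> k"
  proof -
    have "j - 1 \<in> {1..n}" "k - 1 \<in> {1..n}" using that jk by auto
    then show ?thesis using assms unfolding symm_def by blast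
  qed
  then show "Lop n P j k = Lop n P k j" unfolding Lop_entry by auto
qed

lemma Lop_pow_entry:
  "a \<in> {1..n} \<Longrightarrow> b \<in> {1..n} \<Longrightarrow>
   (Lop n ^^ s) P a b = (if s < a \<and> s < b then P (a - s) (b - s) else 0)"
proof (induction s arbitrary: a b)
  case (Suc s)
  show ?case
  proof (cases "2 \<le> a \<and> 2 \<le> b")
    case True
    then have "a - 1 \<in> {1..n}" "b - 1 \<in> {1..n}" using Suc.prems by auto
    note IH = Suc.IH[OF this]
    have "(Lop n ^^ Suc s) P a b = (Lop n ^^ s) P (a - 1) (b - 1)"
      using True Suc.prems by (simp add: Lop_entry)
    with IH True show ?thesis by (auto simp: diff_diff_add)
  qed (auto simp: Lop_entry)
qed simp

lemma funpow_Lop_zero: "(Lop n ^^ s) (\<lambda>a b. 0) = (\<lambda>a b. 0)"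
  by (induction s) (auto simp: Lop_entry fun_eq_iff)

lemma transpose_Amat_pow_entry:
  "a \<in> {1..n} \<Longrightarrow> ((\<lambda>M. mmul n (mtrans (Amat n)) M) ^^ s) Z a c = (if s < a then Z (a - s) c else 0)"
proof (induction s arbitrary: a)
  case (Suc s)
  show ?case
  proof (cases "2 \<le> a")
    case True
    then have "a - 1 \<in> {1..n}" using Suc.prems by auto
    note IH = Suc.IH[OF this]
    have "((\<lambda>M. mmul n (mtrans (Amat n)) M) ^^ Suc s) Z a c
        = ((\<lambda>M. mmul n (mtrans (Amat n)) M) ^^ s) Z (a - 1) c"
      using True Suc.prems by (simp add: mmul_transpose_Amat_entry)
    with IH True show ?thesis by (auto simp: diff_diff_add)
  qed (use Suc.prems in \<open>auto simp: mmul_transpose_Amat_entry\<close>)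
qed simp

lemma Xop_entry: "a \<in> {1..n} \<Longrightarrow> Xop n m P a c = (if m < a then (Lop n ^^ (a - 1 - m)) P n c else 0)"
  unfolding Xop_def by (simp add: transpose_Amat_pow_entry X0_def diff_diff_add add.commute)

definition last_row_sum :: "nat \<Rightarrow> (nat \<Rightarrow> mat) \<Rightarrow> mat" where
  "last_row_sum n C i j = (\<Sum>m=1..i-1. (Lop n ^^ (i - 1 - m)) (C m) n j)"

lemma Mmat_entry:
  assumes i: "i \<in> {1..n}" and k: "k \<in> {1..n}"
  shows "Mmat n F G i k = (if 2 \<le> k then last_row_sum n F i (k - 1) else 0) + G i k / 2"
proof -
  define f where "f m = (if 2 \<le> k then (Lop n ^^ (i - 1 - m)) (F m) n (k - 1) else 0)" for m
  have "(\<Sum>m=1..n-1. mmul n (Xop n m (F m)) (Amat n) i k) = (\<Sum>m=1..n-1. if m < i then f m else 0)"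
    using i k by (intro sum.cong) (auto simp: mmul_Amat_entry Xop_entry f_def)
  also have "\<dots> = sum f ({1..n-1} \<inter> {m. m < i})"
    by (simp add: sum.inter_restrict)
  also have "{1..n-1} \<inter> {m. m < i} = {1..i-1}"
    using i by auto
  finally show ?thesis
    unfolding Mmat_def last_row_sum_def f_def by (cases "2 \<le> k") simp_all
qed

lemma last_row_sum_diff:
  assumes "j \<in> {1..n}"
  shows "last_row_sum n (\<lambda>m a b. C m a b - C' m a b) i j = last_row_sum n C i j - last_row_sum n C' i j"
proof -
  have n: "n \<in> {1..n}" using assms by auto
  show ?thesis
    unfolding last_row_sum_def Lop_pow_entry[OF n assms] sum_subtractf[symmetric] by (intro sum.cong) auto
qed

section \<open>Orders of magnitude at the origin\<close>

definition l1_norm :: "nat \<Rightarrow> vec \<Rightarrow> real \<Rightarrow> real" where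
  "l1_norm n x \<nu> = (\<Sum>j=1..n. \<bar>x j\<bar>) + \<bar>\<nu>\<bar>"

definition is_O_pow :: "nat \<Rightarrow> nat \<Rightarrow> (vec \<Rightarrow> real \<Rightarrow> real) \<Rightarrow> bool" where
  "is_O_pow n k g \<longleftrightarrow> (\<exists>C. \<forall>x \<nu>. l1_norm n x \<nu> \<le> 1 \<longrightarrow> \<bar>g x \<nu>\<bar> \<le> C * l1_norm n x \<nu> ^ k)"

lemma l1_norm_nonneg: "0 \<le> l1_norm n x \<nu>"
  unfolding l1_norm_def by (simp add: sum_nonneg)

lemma l1_norm_scale: "l1_norm n (\<lambda>j. t * x j) (t * \<nu>) = \<bar>t\<bar> * l1_norm n x \<nu>"
  unfolding l1_norm_def by (simp add: abs_mult sum_distrib_left algebra_simps)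

lemma is_O_powI:
  assumes "\<And>x \<nu>. l1_norm n x \<nu> \<le> 1 \<Longrightarrow> \<bar>g x \<nu>\<bar> \<le> C * l1_norm n x \<nu> ^ k"
  shows "is_O_pow n k g"
  using assms unfolding is_O_pow_def by blast

lemma is_O_powE:
  assumes "is_O_pow n k g"
  obtains C where "\<And>x \<nu>. l1_norm n x \<nu> \<le> 1 \<Longrightarrow> \<bar>g x \<nu>\<bar> \<le> C * l1_norm n x \<nu> ^ k"
  using assms unfolding is_O_pow_def by blast

lemma is_O_pow_add:
  assumes "is_O_pow n k f" "is_O_pow n k g"
  shows "is_O_pow n k (\<lambda>x \<nu>. f x \<nu> + g x \<nu>)"
proof -
  obtain C1 C2 where
    "\<And>x \<nu>. l1_norm n x \<nu> \<le> 1 \<Longrightarrow> \<bar>f x \<nu>\<bar> \<le> C1 * l1_norm n x \<nu> ^ k"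
    "\<And>x \<nu>. l1_norm n x \<nu> \<le> 1 \<Longrightarrow> \<bar>g x \<nu>\<bar> \<le> C2 * l1_norm n x \<nu> ^ k"
    using assms by (metis is_O_powE)
  then show ?thesis
    by (intro is_O_powI[where C = "C1 + C2"]) (smt (verit, best) distrib_right)
qed

lemma is_O_pow_uminus: "is_O_pow n k f \<Longrightarrow> is_O_pow n k (\<lambda>x \<nu>. - f x \<nu>)"
  unfolding is_O_pow_def by simp

lemma is_O_pow_diff:
  "is_O_pow n k f \<Longrightarrow> is_O_pow n k g \<Longrightarrow> is_O_pow n k (\<lambda>x \<nu>. f x \<nu> - g x \<nu>)"
  using is_O_pow_add[OF _ is_O_pow_uminus] by simp

lemma is_O_pow_mult:
  assumes "is_O_pow n a f" "is_O_pow n b g" "k = a + b"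
  shows "is_O_pow n k (\<lambda>x \<nu>. f x \<nu> * g x \<nu>)"
proof -
  obtain C1 C2 where
    f: "\<And>x \<nu>. l1_norm n x \<nu> \<le> 1 \<Longrightarrow> \<bar>f x \<nu>\<bar> \<le> C1 * l1_norm n x \<nu> ^ a" and
    g: "\<And>x \<nu>. l1_norm n x \<nu> \<le> 1 \<Longrightarrow> \<bar>g x \<nu>\<bar> \<le> C2 * l1_norm n x \<nu> ^ b"
    using assms by (metis is_O_powE)
  show ?thesis
  proof (rule is_O_powI[where C = "C1 * C2"])
    fix x \<nu> assume s: "l1_norm n x \<nu> \<le> 1"
    have "\<bar>f x \<nu> * g x \<nu>\<bar> \<le> (C1 * l1_norm n x \<nu> ^ a) * (C2 * l1_norm n x \<nu> ^ b)"
      unfolding abs_mult using f[OF s] g[OF s] by (intro mult_mono) (auto intro: order_trans[OF abs_ge_zero])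
    then show "\<bar>f x \<nu> * g x \<nu>\<bar> \<le> (C1 * C2) * l1_norm n x \<nu> ^ k"
      by (simp add: assms(3) power_add ac_simps)
  qed
qed

lemma is_O_pow_weaken:
  assumes "is_O_pow n j f" "k \<le> j"
  shows "is_O_pow n k f"
proof -
  obtain C where C: "\<And>x \<nu>. l1_norm n x \<nu> \<le> 1 \<Longrightarrow> \<bar>f x \<nu>\<bar> \<le> C * l1_norm n x \<nu> ^ j"
    using assms(1) is_O_powE by blast
  show ?thesis
  proof (rule is_O_powI[where C = "\<bar>C\<bar>"])
    fix x \<nu> assume s: "l1_norm n x \<nu> \<le> 1"
    have "l1_norm n x \<nu> ^ j \<le> l1_norm n x \<nu> ^ k"
      using s assms(2) by (simp add: power_decreasing l1_norm_nonneg)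
    then have "C * l1_norm n x \<nu> ^ j \<le> \<bar>C\<bar> * l1_norm n x \<nu> ^ k"
      by (smt (verit) abs_ge_self l1_norm_nonneg mult_mono zero_le_power)
    then show "\<bar>f x \<nu>\<bar> \<le> \<bar>C\<bar> * l1_norm n x \<nu> ^ k"
      using C[OF s] by linarith
  qed
qed

lemma is_O_pow_const: "is_O_pow n 0 (\<lambda>x \<nu>. c)"
  by (rule is_O_powI[where C = "\<bar>c\<bar>"]) simp

lemma is_O_pow_coord:
  assumes "j \<in> {1..n}"
  shows "is_O_pow n 1 (\<lambda>x \<nu>. x j)"
proof (rule is_O_powI[where C = 1])
  fix x :: "nat \<Rightarrow> real" and \<nu> :: real
  have "\<bar>x j\<bar> \<le> (\<Sum>j=1..n. \<bar>x j\<bar>)"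
    using assms by (intro member_le_sum) auto
  then show "\<bar>x j\<bar> \<le> 1 * l1_norm n x \<nu> ^ 1"
    unfolding l1_norm_def by simp
qed

lemma is_O_pow_input: "is_O_pow n 1 (\<lambda>x \<nu>. \<nu>)"
  by (rule is_O_powI[where C = 1]) (simp add: l1_norm_def sum_nonneg)

lemma is_O_pow_sum:
  assumes "finite S" "\<And>j. j \<in> S \<Longrightarrow> is_O_pow n k (f j)"
  shows "is_O_pow n k (\<lambda>x \<nu>. \<Sum>j\<in>S. f j x \<nu>)"
  using assms
proof (induction S rule: finite_induct)
  case empty
  show ?case by (rule is_O_powI[where C = 0]) simp
next
  case (insert a S)
  then show ?case by (simp add: is_O_pow_add)
qed

lemma is_O_pow_bilin:
  assumes "\<And>j. j \<in> {1..n} \<Longrightarrow> is_O_pow n a (\<lambda>x \<nu>. u x \<nu> j)"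
    and "\<And>j. j \<in> {1..n} \<Longrightarrow> is_O_pow n b (\<lambda>x \<nu>. v x \<nu> j)"
    and "k = a + b"
  shows "is_O_pow n k (\<lambda>x \<nu>. bilin n P (u x \<nu>) (v x \<nu>))"
  unfolding bilin_def using assms
  by (intro is_O_pow_sum is_O_pow_mult[where a = a and b = b] is_O_pow_mult[where a = a and b = 0]
      is_O_pow_const) auto

lemma is_O_pow_matvec:
  assumes "\<And>j. j \<in> {1..n} \<Longrightarrow> is_O_pow n k (\<lambda>x \<nu>. u x \<nu> j)"
  shows "is_O_pow n k (\<lambda>x \<nu>. matvec n M (u x \<nu>) i)"
  unfolding matvec_def using assms
  by (intro is_O_pow_sum is_O_pow_mult[where a = 0 and b = k] is_O_pow_const) auto

lemma is_O_pow_quadform: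
  assumes "\<And>j. j \<in> {1..n} \<Longrightarrow> is_O_pow n a (\<lambda>x \<nu>. u x \<nu> j)" "k = a + a"
  shows "is_O_pow n k (\<lambda>x \<nu>. quadform n P (u x \<nu>))"
  unfolding quadform_eq_bilin by (rule is_O_pow_bilin[OF assms(1) assms(1) assms(2)])

lemma is_O_pow_uniform:
  assumes "\<And>i. i \<in> {1..n} \<Longrightarrow> is_O_pow n k (g i)"
  obtains C where "\<And>x \<nu> i. l1_norm n x \<nu> \<le> 1 \<Longrightarrow> i \<in> {1..n} \<Longrightarrow> \<bar>g i x \<nu>\<bar> \<le> C * l1_norm n x \<nu> ^ k"
proof -
  have "is_O_pow n k (\<lambda>x \<nu>. \<Sum>i=1..n. \<bar>g i x \<nu>\<bar>)"
    using assms by (intro is_O_pow_sum) (auto simp: is_O_pow_def)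
  then obtain C where C: "\<And>x \<nu>. l1_norm n x \<nu> \<le> 1 \<Longrightarrow> \<bar>\<Sum>i=1..n. \<bar>g i x \<nu>\<bar>\<bar> \<le> C * l1_norm n x \<nu> ^ k"
    using is_O_powE by blast
  have "\<bar>g i x \<nu>\<bar> \<le> C * l1_norm n x \<nu> ^ k" if "l1_norm n x \<nu> \<le> 1" "i \<in> {1..n}" for x \<nu> i
  proof -
    have "\<bar>g i x \<nu>\<bar> \<le> (\<Sum>i=1..n. \<bar>g i x \<nu>\<bar>)"
      using that(2) by (intro member_le_sum) auto
    then show ?thesis using C[OF that(1)] by simp
  qed
  then show ?thesis by (rule that)
qed

lemma homogeneous_quadratic_zero_if_cubic_bound:
  fixes g :: "(nat \<Rightarrow> real) \<Rightarrow> real \<Rightarrow> real"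
  assumes hom: "\<And>t x \<nu>. g (\<lambda>j. t * x j) (t * \<nu>) = t\<^sup>2 * g x \<nu>"
    and "\<delta> > 0"
    and bound: "\<And>x \<nu>. l1_norm n x \<nu> < \<delta> \<Longrightarrow> \<bar>g x \<nu>\<bar> \<le> C * l1_norm n x \<nu> ^ 3"
  shows "g x \<nu> = 0"
proof -
  define s where "s = l1_norm n x \<nu>"
  have s: "0 \<le> s" unfolding s_def by (rule l1_norm_nonneg)
  have "\<bar>g x \<nu>\<bar> \<le> C * s ^ 3 * t" if t: "0 < t" "t < \<delta> / (s + 1)" for t
  proof -
    have "t * s \<le> t * (s + 1)" using t by simp
    also have "\<dots> < \<delta>" using t s by (simp add: field_simps)
    finally have "l1_norm n (\<lambda>j. t * x j) (t * \<nu>) < \<delta>"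
      using t by (simp add: l1_norm_scale s_def)
    note near = this
    have "t\<^sup>2 * \<bar>g x \<nu>\<bar> = \<bar>g (\<lambda>j. t * x j) (t * \<nu>)\<bar>"
      unfolding hom abs_mult by simp
    also have "\<dots> \<le> C * (t * s) ^ 3"
      using bound[OF near] t by (simp add: l1_norm_scale s_def)
    also have "\<dots> = t\<^sup>2 * (C * s ^ 3 * t)"
      by (simp add: power_mult_distrib power2_eq_square power3_eq_cube)
    finally show ?thesis using t by simp
  qed
  then have "\<forall>\<^sub>F t in at_right 0. \<bar>g x \<nu>\<bar> \<le> C * s ^ 3 * t"
    unfolding eventually_at_right_field using \<open>\<delta> > 0\<close> s
    by (intro exI[of _ "\<delta> / (s + 1)"]) auto
  moreover have "((\<lambda>t. C * s ^ 3 * t) \<longlongrightarrow> 0) (at_right 0)"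
    by (intro tendsto_eq_intros) auto
  ultimately have "\<bar>g x \<nu>\<bar> \<le> 0"
    by (intro tendsto_le[OF trivial_limit_at_right_real _ tendsto_const])
  then show ?thesis by simp
qed

section \<open>The residual of a quadratic change of coordinates\<close>

definition residual :: "nat \<Rightarrow> (nat \<Rightarrow> mat) \<Rightarrow> mat \<Rightarrow> vec \<Rightarrow> (nat \<Rightarrow> mat) \<Rightarrow> mat
    \<Rightarrow> (nat \<Rightarrow> mat) \<Rightarrow> mat \<Rightarrow> vec \<Rightarrow> real \<Rightarrow> vec" where
  "residual n F G h Fb Gb P Q = (\<lambda>x \<nu>. let \<Phi> = (\<lambda>y. (\<lambda>i. y i + quadform n (P i) y));
                            x' = sys_map n Fb Gb (\<lambda>_. 0) x \<nu>
                        in (\<lambda>i. \<Phi> x' i - sys_map n F G h (\<Phi> x) (\<nu> - quadform n Q x) i))"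

lemma quad_equiv_iff_residual:
  "quad_equiv n F G h Fb Gb (\<lambda>_. 0) \<longleftrightarrow>
     (\<exists>P Q. (\<forall>i\<in>{1..n}. symm n (P i)) \<and> symm n Q \<and> is_O3 n (residual n F G h Fb Gb P Q))"
  unfolding quad_equiv_def residual_def ..

text \<open>The term P_{i+1} of the i-th row is absent for i = n, reflecting x_{n+1} = 0.\<close>
definition quad_coeff :: "nat \<Rightarrow> (nat \<Rightarrow> mat) \<Rightarrow> (nat \<Rightarrow> mat) \<Rightarrow> (nat \<Rightarrow> mat) \<Rightarrow> mat
    \<Rightarrow> nat \<Rightarrow> mat" where
  "quad_coeff n F Fb P Q i = (\<lambda>a b. Fb i a b + Lop n (P i) a b
     - (if i < n then P (Suc i) a b else 0) + (if i = n then Q a b else 0) - F i a b)"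

definition quad_part :: "nat \<Rightarrow> (nat \<Rightarrow> mat) \<Rightarrow> mat \<Rightarrow> vec \<Rightarrow> (nat \<Rightarrow> mat) \<Rightarrow> mat
    \<Rightarrow> (nat \<Rightarrow> mat) \<Rightarrow> mat \<Rightarrow> vec \<Rightarrow> real \<Rightarrow> vec" where
  "quad_part n F G h Fb Gb P Q x \<nu> i = quadform n (quad_coeff n F Fb P Q i) x
     + \<nu> * (matvec n Gb x i + 2 * matvec n (mmul n (P i) (Amat n)) x n - matvec n G x i)
     + \<nu>\<^sup>2 * (P i n n - h i)"

definition cubic_part :: "nat \<Rightarrow> (nat \<Rightarrow> mat) \<Rightarrow> mat \<Rightarrow> vec \<Rightarrow> (nat \<Rightarrow> mat) \<Rightarrow> mat
    \<Rightarrow> (nat \<Rightarrow> mat) \<Rightarrow> mat \<Rightarrow> vec \<Rightarrow> real \<Rightarrow> vec" where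
  "cubic_part n F G h Fb Gb P Q x \<nu> i =
    (let l = (\<lambda>j. matvec n (Amat n) x j + bvec n j * \<nu>);
         q = (\<lambda>j. quadform n (Fb j) x + matvec n Gb x j * \<nu>);
         p = (\<lambda>j. quadform n (P j) x);
         \<mu> = \<nu> - quadform n Q x
     in bilin n (P i) l q + bilin n (P i) q l + quadform n (P i) q
        - (bilin n (F i) x p + bilin n (F i) p x + quadform n (F i) p)
        + matvec n G x i * quadform n Q x - matvec n G p i * \<mu> - h i * (\<mu>\<^sup>2 - \<nu>\<^sup>2))"

lemma residual_decomposition:
  assumes n: "1 \<le> n" and i: "i \<in> {1..n}" and sP: "symm n (P i)"
  shows "residual n F G h Fb Gb P Q x \<nu> i
    = quad_part n F G h Fb Gb P Q x \<nu> i + cubic_part n F G h Fb Gb P Q x \<nu> i"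
proof -
  define Ax where "Ax = matvec n (Amat n) x"
  define l where "l = (\<lambda>j. Ax j + bvec n j * \<nu>)"
  define q where "q = (\<lambda>j. quadform n (Fb j) x + matvec n Gb x j * \<nu>)"
  define p where "p = (\<lambda>j. quadform n (P j) x)"
  define qQ where "qQ = quadform n Q x"
  have R: "residual n F G h Fb Gb P Q x \<nu> i = l i + q i + quadform n (P i) (\<lambda>j. l j + q j)
     - (matvec n (Amat n) (\<lambda>j. x j + p j) i + bvec n i * (\<nu> - qQ) + quadform n (F i) (\<lambda>j. x j + p j)
        + matvec n G (\<lambda>j. x j + p j) i * (\<nu> - qQ) + h i * (\<nu> - qQ)\<^sup>2)"
    unfolding residual_def Let_def l_def q_def p_def qQ_def Ax_def sys_map_def by (simp add: algebra_simps)
  have cross: "bilin n (P i) Ax (\<lambda>k. bvec n k * \<nu>) + bilin n (P i) (\<lambda>k. bvec n k * \<nu>) Ax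
      = \<nu> * (2 * matvec n (mmul n (P i) (Amat n)) x n)"
  proof -
    have row: "(\<Sum>j=1..n. P i n j * Ax j) = matvec n (mmul n (P i) (Amat n)) x n"
      unfolding Ax_def matvec_mmul[symmetric] by (simp add: matvec_def[of n "P i"])
    have "(\<Sum>j=1..n. Ax j * P i j n) = (\<Sum>j=1..n. P i n j * Ax j)"
      using sP n by (intro sum.cong) (auto simp: symm_def)
    with row show ?thesis using bilin_bvec_right[OF n] bilin_bvec_left[OF n] by simp
  qed
  have "quadform n (P i) l = quadform n (P i) Ax
      + (bilin n (P i) Ax (\<lambda>k. bvec n k * \<nu>) + bilin n (P i) (\<lambda>k. bvec n k * \<nu>) Ax)
      + quadform n (P i) (\<lambda>k. bvec n k * \<nu>)"
    unfolding l_def quadform_add by simp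
  also have "\<dots> = quadform n (Lop n (P i)) x + \<nu> * (2 * matvec n (mmul n (P i) (Amat n)) x n) + \<nu>\<^sup>2 * P i n n"
    unfolding cross quadform_bvec[OF n] by (simp add: Ax_def quadform_matvec Lop_def)
  finally have l_part: "quadform n (P i) l = \<dots>" .
  have coeff: "quadform n (quad_coeff n F Fb P Q i) x = quadform n (Fb i) x + quadform n (Lop n (P i)) x
     - matvec n (Amat n) p i + bvec n i * qQ - quadform n (F i) x"
    using i unfolding quad_coeff_def
    by (cases "i = n") (simp_all add: quadform_matrix_add quadform_matrix_diff matvec_Amat p_def qQ_def bvec_def
        quadform_zero_matrix if_distrib cong: if_cong)
  show ?thesis
    unfolding R quad_part_def cubic_part_def Let_def coeff
    unfolding Ax_def[symmetric] l_def[symmetric] q_def[symmetric] p_def[symmetric] qQ_def[symmetric]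
    using l_part unfolding quadform_add matvec_add
    by (simp add: l_def q_def Ax_def algebra_simps power2_eq_square)
qed

lemma cubic_part_is_O3: "is_O_pow n 3 (\<lambda>x \<nu>. cubic_part n F G h Fb Gb P Q x \<nu> i)"
proof -
  have x: "\<And>j. j \<in> {1..n} \<Longrightarrow> is_O_pow n 1 (\<lambda>x \<nu>. x j)"
    by (rule is_O_pow_coord)
  have quad: "\<And>M. is_O_pow n 2 (\<lambda>x \<nu>. quadform n M x)"
    by (rule is_O_pow_quadform[OF x]) simp_all
  have l: "is_O_pow n 1 (\<lambda>x \<nu>. matvec n (Amat n) x j + bvec n j * \<nu>)" for j
    by (intro is_O_pow_add is_O_pow_matvec x is_O_pow_mult[OF is_O_pow_const is_O_pow_input]) simp_all
  have q: "is_O_pow n 2 (\<lambda>x \<nu>. quadform n (Fb j) x + matvec n Gb x j * \<nu>)" for j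
    by (intro is_O_pow_add quad is_O_pow_mult[OF is_O_pow_matvec[OF x] is_O_pow_input]) simp_all
  have \<mu>: "is_O_pow n 1 (\<lambda>x \<nu>. \<nu> - quadform n Q x)"
    by (intro is_O_pow_diff is_O_pow_input is_O_pow_weaken[OF quad]) simp
  have h: "is_O_pow n 3 (\<lambda>x \<nu>. h i * ((\<nu> - quadform n Q x)\<^sup>2 - \<nu>\<^sup>2))"
  proof -
    have "is_O_pow n 3 (\<lambda>x \<nu>. h i * (quadform n Q x * quadform n Q x - 2 * \<nu> * quadform n Q x))"
      by (intro is_O_pow_mult[OF is_O_pow_const] is_O_pow_diff
          is_O_pow_weaken[OF is_O_pow_mult[OF quad quad refl]]
          is_O_pow_mult[OF is_O_pow_mult[OF is_O_pow_const is_O_pow_input refl] quad]) simp_all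
    then show ?thesis by (simp add: power2_eq_square algebra_simps)
  qed
  show ?thesis
    unfolding cubic_part_def Let_def
    by (intro is_O_pow_add is_O_pow_diff h
        is_O_pow_bilin[OF l q] is_O_pow_bilin[OF q l] is_O_pow_weaken[OF is_O_pow_quadform[OF q]]
        is_O_pow_bilin[OF x quad] is_O_pow_bilin[OF quad x] is_O_pow_weaken[OF is_O_pow_quadform[OF quad]]
        is_O_pow_mult[OF is_O_pow_matvec[OF x] quad] is_O_pow_mult[OF is_O_pow_matvec[OF quad] \<mu>]) auto
qed

lemma quad_part_scale:
  "quad_part n F G h Fb Gb P Q (\<lambda>j. t * x j) (t * \<nu>) i = t\<^sup>2 * quad_part n F G h Fb Gb P Q x \<nu> i"
  unfolding quad_part_def quadform_scale matvec_scale by (simp add: power2_eq_square algebra_simps)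

lemma is_O3_residual_iff:
  assumes n: "1 \<le> n" and sP: "\<forall>i\<in>{1..n}. symm n (P i)"
  shows "is_O3 n (residual n F G h Fb Gb P Q) \<longleftrightarrow>
    (\<forall>i\<in>{1..n}. \<forall>x \<nu>. quad_part n F G h Fb Gb P Q x \<nu> i = 0)"
proof
  assume "is_O3 n (residual n F G h Fb Gb P Q)"
  then obtain C0 \<delta> where "\<delta> > 0" and O3_bound: "\<And>x \<nu>. l1_norm n x \<nu> < \<delta> \<Longrightarrow>
      (\<forall>i\<in>{1..n}. \<bar>residual n F G h Fb Gb P Q x \<nu> i\<bar> \<le> C0 * l1_norm n x \<nu> ^ 3)"
    unfolding is_O3_def l1_norm_def by blast
  show "\<forall>i\<in>{1..n}. \<forall>x \<nu>. quad_part n F G h Fb Gb P Q x \<nu> i = 0"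
  proof (intro ballI allI)
    fix i x \<nu> assume i: "i \<in> {1..n}"
    have C0: "\<bar>residual n F G h Fb Gb P Q y w i\<bar> \<le> C0 * l1_norm n y w ^ 3"
      if "l1_norm n y w < \<delta>" for y w
      using O3_bound[OF that] i by blast
    obtain C1 where C1: "\<And>x \<nu>. l1_norm n x \<nu> \<le> 1 \<Longrightarrow>
        \<bar>cubic_part n F G h Fb Gb P Q x \<nu> i\<bar> \<le> C1 * l1_norm n x \<nu> ^ 3"
      using is_O_powE[OF cubic_part_is_O3[of n F G h Fb Gb P Q i]] by blast
    show "quad_part n F G h Fb Gb P Q x \<nu> i = 0"
    proof (rule homogeneous_quadratic_zero_if_cubic_bound
        [where g = "\<lambda>x \<nu>. quad_part n F G h Fb Gb P Q x \<nu> i"])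
      show "min \<delta> 1 > 0" using \<open>\<delta> > 0\<close> by simp
      have sPi: "symm n (P i)" using sP i by blast
      fix y w assume "l1_norm n y w < min \<delta> 1"
      then have R: "\<bar>residual n F G h Fb Gb P Q y w i\<bar> \<le> C0 * l1_norm n y w ^ 3"
        and E: "\<bar>cubic_part n F G h Fb Gb P Q y w i\<bar> \<le> C1 * l1_norm n y w ^ 3"
        using C0[of y w] C1[of y w] by simp_all
      have "quad_part n F G h Fb Gb P Q y w i
          = residual n F G h Fb Gb P Q y w i - cubic_part n F G h Fb Gb P Q y w i"
        using residual_decomposition[where P = P, OF n i sPi] by simp
      then show "\<bar>quad_part n F G h Fb Gb P Q y w i\<bar> \<le> (C0 + C1) * l1_norm n y w ^ 3"
        unfolding distrib_right by (metis order_trans[OF abs_triangle_ineq4 add_mono[OF R E]])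
    qed (rule quad_part_scale)
  qed
next
  assume quad: "\<forall>i\<in>{1..n}. \<forall>x \<nu>. quad_part n F G h Fb Gb P Q x \<nu> i = 0"
  obtain C where C: "\<And>x \<nu> i. l1_norm n x \<nu> \<le> 1 \<Longrightarrow> i \<in> {1..n} \<Longrightarrow>
      \<bar>cubic_part n F G h Fb Gb P Q x \<nu> i\<bar> \<le> C * l1_norm n x \<nu> ^ 3"
    using is_O_pow_uniform[of n 3 "\<lambda>i x \<nu>. cubic_part n F G h Fb Gb P Q x \<nu> i", OF cubic_part_is_O3]
    by blast
  have "\<bar>residual n F G h Fb Gb P Q x \<nu> i\<bar> \<le> C * l1_norm n x \<nu> ^ 3"
    if "l1_norm n x \<nu> < 1" "i \<in> {1..n}" for x \<nu> i
    using C[of x \<nu> i] residual_decomposition[where P = P, OF n that(2)] quad sP that by simp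
  then show "is_O3 n (residual n F G h Fb Gb P Q)"
    unfolding is_O3_def l1_norm_def by (intro exI[of _ C] exI[of _ 1]) simp
qed

section \<open>The homological equations\<close>

definition homological_eqns :: "nat \<Rightarrow> (nat \<Rightarrow> mat) \<Rightarrow> mat \<Rightarrow> vec \<Rightarrow> (nat \<Rightarrow> mat) \<Rightarrow> mat
    \<Rightarrow> (nat \<Rightarrow> mat) \<Rightarrow> mat \<Rightarrow> nat \<Rightarrow> bool" where
  "homological_eqns n F G h Fb Gb P Q i \<longleftrightarrow>
     (\<forall>a\<in>{1..n}. \<forall>b\<in>{1..n}. quad_coeff n F Fb P Q i a b = 0) \<and> P i n n = h i \<and>
     (\<forall>k\<in>{1..n}. Gb i k = G i k - 2 * mmul n (P i) (Amat n) n k)"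

lemma quad_part_eq_zero_iff:
  assumes "symm n (quad_coeff n F Fb P Q i)"
  shows "(\<forall>x \<nu>. quad_part n F G h Fb Gb P Q x \<nu> i = 0) \<longleftrightarrow> homological_eqns n F G h Fb Gb P Q i"
proof
  assume zero: "\<forall>x \<nu>. quad_part n F G h Fb Gb P Q x \<nu> i = 0"
  have quad0: "\<forall>x. quadform n (quad_coeff n F Fb P Q i) x = 0"
    using zero[rule_format, of _ 0] by (simp add: quad_part_def)
  then have coeff: "\<forall>a\<in>{1..n}. \<forall>b\<in>{1..n}. quad_coeff n F Fb P Q i a b = 0"
    using symm_quadform_eq_zero_iff[OF assms] by blast
  have corner: "P i n n = h i"
    using zero[rule_format, of "\<lambda>_. 0" 1] by (simp add: quad_part_def quadform_zero_vector matvec_zero_vector)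
  have "Gb i k = G i k - 2 * mmul n (P i) (Amat n) n k" if k: "k \<in> {1..n}" for k
    using zero[rule_format, of "unit_vec k" 1] quad0 corner k
    by (simp add: quad_part_def matvec_unit_vec)
  with coeff corner show "homological_eqns n F G h Fb Gb P Q i"
    unfolding homological_eqns_def by blast
next
  assume eqns: "homological_eqns n F G h Fb Gb P Q i"
  show "\<forall>x \<nu>. quad_part n F G h Fb Gb P Q x \<nu> i = 0"
  proof (intro allI)
    fix x \<nu>
    have "matvec n Gb x i + 2 * matvec n (mmul n (P i) (Amat n)) x n - matvec n G x i
        = (\<Sum>k=1..n. (Gb i k + 2 * mmul n (P i) (Amat n) n k - G i k) * x k)"
      unfolding matvec_def by (simp add: sum_distrib_left sum.distrib sum_subtractf algebra_simps)
    also have "\<dots> = 0" using eqns unfolding homological_eqns_def by simp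
    finally show "quad_part n F G h Fb Gb P Q x \<nu> i = 0"
      using eqns unfolding homological_eqns_def quad_part_def quadform_def by simp
  qed
qed

lemma symm_quad_coeff:
  assumes "symm n (Fb i)" "symm n (F i)" "symm n (P i)" "i < n \<Longrightarrow> symm n (P (Suc i))" "symm n Q"
  shows "symm n (quad_coeff n F Fb P Q i)"
  using assms symm_Lop[OF assms(3)] unfolding symm_def quad_coeff_def by auto

lemma quad_equiv_iff_homological_eqns:
  assumes n: "1 \<le> n" and F: "\<forall>i\<in>{1..n}. symm n (F i)" and Fb: "\<forall>i\<in>{1..n}. symm n (Fb i)"
  shows "quad_equiv n F G h Fb Gb (\<lambda>_. 0) \<longleftrightarrow>
    (\<exists>P Q. (\<forall>i\<in>{1..n}. symm n (P i)) \<and> symm n Q \<and> (\<forall>i\<in>{1..n}. homological_eqns n F G h Fb Gb P Q i))"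
proof -
  have "is_O3 n (residual n F G h Fb Gb P Q) \<longleftrightarrow> (\<forall>i\<in>{1..n}. homological_eqns n F G h Fb Gb P Q i)"
    if sP: "\<forall>i\<in>{1..n}. symm n (P i)" and sQ: "symm n Q" for P Q
  proof -
    have "symm n (quad_coeff n F Fb P Q i)" if i: "i \<in> {1..n}" for i
      using i sP sQ F Fb by (intro symm_quad_coeff) auto
    then show ?thesis
      unfolding is_O3_residual_iff[OF n sP] using quad_part_eq_zero_iff by blast
  qed
  then show ?thesis
    unfolding quad_equiv_iff_residual by blast
qed

definition shift_recurrence :: "nat \<Rightarrow> (nat \<Rightarrow> mat) \<Rightarrow> (nat \<Rightarrow> mat) \<Rightarrow> bool" where
  "shift_recurrence n P C \<longleftrightarrow> (\<forall>m\<in>{1..<n}. \<forall>a\<in>{1..n}. \<forall>b\<in>{1..n}.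
     P (Suc m) a b = Lop n (P m) a b - C m a b)"

lemma shift_recurrence_closed_form:
  assumes rec: "shift_recurrence n P C"
  shows "Suc j \<le> n \<Longrightarrow> a \<in> {1..n} \<Longrightarrow> b \<in> {1..n} \<Longrightarrow>
    P (Suc j) a b = (Lop n ^^ j) (P 1) a b - (\<Sum>m=1..j. (Lop n ^^ (j - m)) (C m) a b)"
proof (induction j arbitrary: a b)
  case (Suc j)
  have step: "P (Suc (Suc j)) a b = Lop n (P (Suc j)) a b - C (Suc j) a b"
    using rec Suc.prems unfolding shift_recurrence_def by auto
  have split: "(\<Sum>m=1..Suc j. (Lop n ^^ (Suc j - m)) (C m) a b)
      = (\<Sum>m=1..j. (Lop n ^^ Suc (j - m)) (C m) a b) + C (Suc j) a b"
    by (simp add: Suc_diff_le)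
  show ?case
  proof (cases "2 \<le> a \<and> 2 \<le> b")
    case True
    then have "a - 1 \<in> {1..n}" "b - 1 \<in> {1..n}" using Suc.prems by auto
    note IH = Suc.IH[OF _ this]
    have "(\<Sum>m=1..j. (Lop n ^^ Suc (j - m)) (C m) a b) = (\<Sum>m=1..j. (Lop n ^^ (j - m)) (C m) (a - 1) (b - 1))"
      using True Suc.prems by (intro sum.cong) (auto simp: Lop_entry)
    moreover have "(Lop n ^^ Suc j) (P 1) a b = (Lop n ^^ j) (P 1) (a - 1) (b - 1)"
      "Lop n (P (Suc j)) a b = P (Suc j) (a - 1) (b - 1)"
      using True Suc.prems by (auto simp: Lop_entry)
    ultimately show ?thesis using step split IH Suc.prems by simp
  next
    case False
    then have "(\<Sum>m=1..j. (Lop n ^^ Suc (j - m)) (C m) a b) = 0"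
      "(Lop n ^^ Suc j) (P 1) a b = 0" "Lop n (P (Suc j)) a b = 0"
      by (auto simp: Lop_entry intro!: sum.neutral)
    then show ?thesis using step split by simp
  qed
qed simp

lemma shift_recurrence_last_row:
  assumes rec: "shift_recurrence n P C" and i: "i \<in> {1..n}" and j: "j \<in> {1..n}"
  shows "P i n j = (if i \<le> j then P 1 (n + 1 - i) (j + 1 - i) else 0) - last_row_sum n C i j"
proof -
  have n: "n \<in> {1..n}" using i by auto
  have "P i n j = (Lop n ^^ (i - 1)) (P 1) n j - last_row_sum n C i j"
    using shift_recurrence_closed_form[OF rec, of "i - 1" n j] i j n unfolding last_row_sum_def by simp
  then show ?thesis
    using i j unfolding Lop_pow_entry[OF n j] by auto
qed

lemma homological_eqns_shift_recurrence:
  assumes "\<forall>i\<in>{1..n}. homological_eqns n F G h Fb Gb P Q i"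
  shows "shift_recurrence n P (\<lambda>m a b. F m a b - Fb m a b)"
  unfolding shift_recurrence_def
proof (intro ballI)
  fix m a b assume m: "m \<in> {1..<n}" and ab: "a \<in> {1..n}" "b \<in> {1..n}"
  then have "quad_coeff n F Fb P Q m a b = 0"
    using assms unfolding homological_eqns_def by auto
  then show "P (Suc m) a b = Lop n (P m) a b - (F m a b - Fb m a b)"
    using m unfolding quad_coeff_def by simp
qed

lemma input_coeff_eq:
  assumes rec: "shift_recurrence n P (\<lambda>m a b. F m a b - Fb m a b)"
    and i: "i \<in> {1..n}" and k: "k \<in> {1..n}"
  shows "G i k - 2 * mmul n (P i) (Amat n) n k = 2 * Mmat n F G i k
    - (if 2 \<le> k then 2 * ((if i < k then P 1 (n + 1 - i) (k - i) else 0) + last_row_sum n Fb i (k - 1))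
       else 0)"
proof (cases "2 \<le> k")
  case True
  then have k1: "k - 1 \<in> {1..n}" using k by auto
  have "mmul n (P i) (Amat n) n k = P i n (k - 1)"
    using True k by (simp add: mmul_Amat_entry)
  also have "\<dots> = (if i < k then P 1 (n + 1 - i) (k - i) else 0)
      - (last_row_sum n F i (k - 1) - last_row_sum n Fb i (k - 1))"
    using True unfolding shift_recurrence_last_row[OF rec i k1] last_row_sum_diff[OF k1] by auto
  finally show ?thesis
    using True unfolding Mmat_entry[OF i k] by simp
qed (simp add: Mmat_entry[OF i k] mmul_Amat_entry)

section \<open>Existence and minimality of the lower triangular form\<close>

primrec shift_solution :: "nat \<Rightarrow> (nat \<Rightarrow> mat) \<Rightarrow> mat \<Rightarrow> nat \<Rightarrow> mat" where
  "shift_solution n C P1 0 = P1"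
| "shift_solution n C P1 (Suc j) = (\<lambda>a b. Lop n (shift_solution n C P1 j) a b - C (Suc j) a b)"

lemma shift_solution_recurrence: "shift_recurrence n (\<lambda>i. shift_solution n C P1 (i - 1)) C"
  unfolding shift_recurrence_def
proof (intro ballI)
  fix m a b assume "m \<in> {1..<n}"
  then obtain m' where "m = Suc m'" by (cases m) auto
  then show "shift_solution n C P1 (Suc m - 1) a b = Lop n (shift_solution n C P1 (m - 1)) a b - C m a b"
    by simp
qed

lemma symm_shift_solution:
  assumes "\<forall>i\<in>{1..n}. symm n (C i)" and "symm n P1"
  shows "j < n \<Longrightarrow> symm n (shift_solution n C P1 j)"
proof (induction j)
  case (Suc j)
  then have "symm n (Lop n (shift_solution n C P1 j))" "symm n (C (Suc j))"
    using assms by (auto intro: symm_Lop)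
  then show ?case unfolding symm_def by simp
qed (use assms in simp)

lemma quad_equiv_lower_triangular_form:
  assumes n: "1 \<le> n" and F: "\<forall>i\<in>{1..n}. symm n (F i)"
  shows "quad_equiv n F G h (\<lambda>i j k. 0) (\<lambda>j k. 2 * lower_diag (Mmat n F G) j k) (\<lambda>_. 0)"
proof -
  define T where "T i j = (if j = n then h i + last_row_sum n F i n else Mmat n F G i (Suc j))" for i j
  \<comment> \<open>After i - 1 shifts the entry (n + 1 - i, j + 1 - i) of P_1 becomes the entry (n, j) of P_i.\<close>
  define P1 where "P1 r c = T (n + 1 - max r c) (min r c + n - max r c)" for r c
  define P where "P i = shift_solution n F P1 (i - 1)" for i
  define Q where "Q a b = F n a b - Lop n (P n) a b" for a b
  have P1_T: "P1 (n + 1 - i) (j + 1 - i) = T i j" if "i \<in> {1..n}" "i \<le> j" "j \<le> n" for i j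
    using that unfolding P1_def by (cases "j = n") (auto simp: max_def min_def)
  have sP: "\<forall>i\<in>{1..n}. symm n (P i)"
    unfolding P_def using symm_shift_solution[OF F] by (auto simp: symm_def P1_def max.commute min.commute)
  have sQ: "symm n Q"
    using sP F symm_Lop[of n "P n"] n unfolding Q_def symm_def by auto
  have P_1: "P 1 = P1" unfolding P_def by simp
  have recF: "shift_recurrence n P F"
    unfolding P_def by (rule shift_solution_recurrence)
  then have rec: "shift_recurrence n P (\<lambda>m a b. F m a b - (\<lambda>i j k. 0) m a b)"
    by simp
  have "homological_eqns n F G h (\<lambda>i j k. 0) (\<lambda>j k. 2 * lower_diag (Mmat n F G) j k) P Q i"
    if i: "i \<in> {1..n}" for i
    unfolding homological_eqns_def
  proof (intro conjI ballI)
    fix a b assume "a \<in> {1..n}" "b \<in> {1..n}"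
    then show "quad_coeff n F (\<lambda>i j k. 0) P Q i a b = 0"
      using i rec unfolding quad_coeff_def shift_recurrence_def Q_def by (cases "i < n") auto
  next
    have nn: "n \<in> {1..n}" using n by simp
    have "P i n n = P1 (n + 1 - i) (n + 1 - i) - last_row_sum n F i n"
      using shift_recurrence_last_row[OF recF i nn, unfolded P_1] i by simp
    then show "P i n n = h i" using P1_T[OF i, of n] i unfolding T_def by simp
  next
    fix k assume k: "k \<in> {1..n}"
    have "last_row_sum n (\<lambda>i j k. 0) i (k - 1) = 0"
      unfolding last_row_sum_def by (simp add: funpow_Lop_zero)
    moreover have "P1 (n + 1 - i) (k - i) = Mmat n F G i k" if "i < k"
      using P1_T[OF i, of "k - 1"] that k unfolding T_def by auto
    ultimately show "2 * lower_diag (Mmat n F G) i k = G i k - 2 * mmul n (P i) (Amat n) n k"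
      using i unfolding input_coeff_eq[OF rec i k, unfolded P_1] lower_diag_def by auto
  qed
  moreover have "\<forall>i\<in>{1..n}. symm n ((\<lambda>i j k. 0::real) i)"
    by (simp add: symm_def)
  ultimately show ?thesis
    using quad_equiv_iff_homological_eqns[OF n F, of "\<lambda>i j k. 0"] sP sQ by blast
qed

lemma lower_Mmat_entry_needs_quadratic_term:
  assumes rec: "shift_recurrence n P (\<lambda>m a b. F m a b - Fb m a b)"
    and Fb: "\<forall>m\<in>{1..n}. symm n (Fb m)"
    and i: "i \<in> {1..n}" and k: "k \<in> {1..n}" and "k \<le> i"
    and Gb: "Gb i k = G i k - 2 * mmul n (P i) (Amat n) n k"
    and "Mmat n F G i k \<noteq> 0" and "Gb i k = 0"
  shows "\<exists>m j r. m \<in> {1..n} \<and> j \<in> {1..n} \<and> r \<in> {1..n} \<and> j \<le> r \<and> Fb m j r \<noteq> 0 \<and>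
    (i, k) = (m + 1 + (n - r), j + 1 + (n - r))"
proof -
  have "2 * Mmat n F G i k = (if 2 \<le> k then 2 * last_row_sum n Fb i (k - 1) else 0)"
    using input_coeff_eq[OF rec i k] Gb assms(5,8) by auto
  then have k2: "2 \<le> k" and "last_row_sum n Fb i (k - 1) \<noteq> 0"
    using assms(7) by (auto split: if_splits)
  then obtain m where m: "m \<in> {1..i-1}" and "(Lop n ^^ (i - 1 - m)) (Fb m) n (k - 1) \<noteq> 0"
    unfolding last_row_sum_def by (meson sum.not_neutral_contains_not_neutral)
  moreover have "n \<in> {1..n}" "k - 1 \<in> {1..n}" using k k2 by auto
  ultimately have d: "i - 1 - m < k - 1" and
    ne: "Fb m (n - (i - 1 - m)) (k - 1 - (i - 1 - m)) \<noteq> 0"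
    by (auto simp: Lop_pow_entry split: if_splits)
  define r where "r = n - (i - 1 - m)"
  define j where "j = k - 1 - (i - 1 - m)"
  have ranges: "m \<in> {1..n}" "j \<in> {1..n}" "r \<in> {1..n}" "j \<le> r"
    using i k m d unfolding r_def j_def by auto
  moreover have "Fb m j r \<noteq> 0"
    using ne Fb ranges unfolding symm_def r_def j_def by metis
  moreover have "(i, k) = (m + 1 + (n - r), j + 1 + (n - r))"
    using i k m d unfolding r_def j_def by auto
  ultimately show ?thesis by blast
qed

lemma nterms_lower_triangular_form_le:
  assumes n: "1 \<le> n" and F: "\<forall>i\<in>{1..n}. symm n (F i)" and Fb: "\<forall>i\<in>{1..n}. symm n (Fb i)"
    and equiv: "quad_equiv n F G h Fb Gb (\<lambda>_. 0)"
  shows "nterms n (\<lambda>i j k. 0) (\<lambda>j k. 2 * lower_diag (Mmat n F G) j k) \<le> nterms n Fb Gb"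
proof -
  obtain P Q where eqns: "\<forall>i\<in>{1..n}. homological_eqns n F G h Fb Gb P Q i"
    using equiv unfolding quad_equiv_iff_homological_eqns[OF n F Fb] by blast
  have rec: "shift_recurrence n P (\<lambda>m a b. F m a b - Fb m a b)"
    using eqns by (rule homological_eqns_shift_recurrence)
  define NF where "NF = {(m, j, r). m \<in> {1..n} \<and> j \<in> {1..n} \<and> r \<in> {1..n} \<and> j \<le> r \<and> Fb m j r \<noteq> 0}"
  define NG where "NG = {(i, k). i \<in> {1..n} \<and> k \<in> {1..n} \<and> Gb i k \<noteq> 0}"
  define NL where "NL = {(i, k). i \<in> {1..n} \<and> k \<in> {1..n} \<and> 2 * lower_diag (Mmat n F G) i k \<noteq> 0}"
  have "NL \<subseteq> NG \<union> (\<lambda>(m, j, r). (m + 1 + (n - r), j + 1 + (n - r))) ` NF"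
  proof
    fix p assume "p \<in> NL"
    then obtain i k where p: "p = (i, k)" and i: "i \<in> {1..n}" and k: "k \<in> {1..n}"
      and "k \<le> i" and "Mmat n F G i k \<noteq> 0"
      unfolding NL_def lower_diag_def by (auto split: if_splits)
    moreover have "Gb i k = G i k - 2 * mmul n (P i) (Amat n) n k"
      using eqns i k unfolding homological_eqns_def by blast
    ultimately show "p \<in> NG \<union> (\<lambda>(m, j, r). (m + 1 + (n - r), j + 1 + (n - r))) ` NF"
      using lower_Mmat_entry_needs_quadratic_term[OF rec Fb i k] unfolding NG_def NF_def image_def
      by fastforce
  qed
  moreover have "finite NF"
    by (rule finite_subset[of _ "{1..n} \<times> {1..n} \<times> {1..n}"]) (auto simp: NF_def)
  moreover have "finite NG"
    by (rule finite_subset[of _ "{1..n} \<times> {1..n}"]) (auto simp: NG_def)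
  ultimately have "card NL \<le> card NG + card NF"
    by (meson card_Un_le card_image_le card_mono finite_UnI finite_imageI add_left_mono order_trans)
  moreover have "nterms n (\<lambda>i j k. 0) (\<lambda>j k. 2 * lower_diag (Mmat n F G) j k) = card NL"
    unfolding nterms_def NL_def by (simp add: case_prod_unfold)
  moreover have "nterms n Fb Gb = card NF + card NG"
    unfolding nterms_def NF_def NG_def ..
  ultimately show ?thesis by simp
qed

theorem theorem4p7:
  fixes n :: nat
    and F :: "nat \<Rightarrow> nat \<Rightarrow> nat \<Rightarrow> real"
    and G :: "nat \<Rightarrow> nat \<Rightarrow> real"
    and h :: "nat \<Rightarrow> real"
  assumes "n \<ge> 2"
    and "\<forall>i\<in>{1..n}. symm n (F i)"
  shows "is_brunovsky n F G h (\<lambda>i j k. 0) (\<lambda>j k. 2 * lower_diag (Mmat n F G) j k)"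
proof -
  have n: "1 \<le> n" using assms(1) by simp
  show ?thesis
    unfolding is_brunovsky_def
    using quad_equiv_lower_triangular_form[OF n assms(2)] nterms_lower_triangular_form_le[OF n assms(2)]
    by (auto simp: symm_def)
qed

end
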